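(* Let $\Lambda\subset\mathbb{Z}^2$ be finite, $K\ge 1$, and $\Sigma_K=(\{0,1\}^K)^\Lambda$. For $\alpha>0$ and $\underline Y\in\Sigma_K$ define, for $\underline X\in\Sigma_K$, $$L_\alpha(\underline X\mid \underline Y)=\alpha\sum_{i\in\Lambda}\sum_{k=1}^K \mathbf 1_{\{X_i^k=Y_i^k\}}-\sum_{k=1}^K 2^{-k}\sum_{\langle i,j\rangle}\mathbf 1_{\{X_i^k\neq X_j^k\}},$$ where $\sum_{\langle i,j\rangle}$ runs over unordered pairs $\{i,j\}\subset\Lambda$ with $|i-j|=1$. Let $F_\alpha(\underline Y)$ denote a maximizer of $L_\alpha(\cdot\mid\underline Y)$ over $\Sigma_K$ (the MAP estimator with parameter $\alpha$). Then for all $0<s\le t$ and all $\underline Y\in\Sigma_K$: if $\hat{\underline X}$ is a maximizer of $L_s(\cdot\mid \underline Y)$, then $\hat{\underline X}$ is also a maximizer of $L_t(\cdot\mid\hat{\underline X})$. In particular, whenever the maximizers are unique, $F_s(\underline Y)=F_t(F_s(\underline Y))$ for all $t\ge s$.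
   Context: Setting: an image is $\underline X=(X_i)_{i\in\Lambda}$ with $X_i=(X_i^1,\dots,X_i^K)\in\{0,1\}^K$ (binary decomposition of the color intensity). The observed image $\underline Y$ arises from $\underline X$ by flipping each bit independently with probability $\epsilon\in(0,1/2)$, so $P(\underline Y\mid\underline X)\propto\exp\{h\sum_{i}\sum_k\mathbf 1_{\{X_i^k=Y_i^k\}}\}$ with $h=\log((1-\epsilon)/\epsilon)$; the a priori measure is $\mu(\underline X)\propto e^{-\beta H(\underline X)}$ with $\beta>0$ and $H(\underline X)=\sum_{k=1}^K\sum_{\langle i,j\rangle}2^{-k}\mathbf 1_{\{X_i^k\ne X_j^k\}}$. The MAP estimator (maximizer of the posterior $P(\underline X\mid\underline Y)\propto P(\underline Y\mid\underline X)\mu(\underline X)$) is exactly a maximizer of $L_\alpha(\cdot\mid\underline Y)$ with $\alpha=h/\beta$. *)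

theory Defs
  imports Complex_Main
begin

type_synonym site = "int \<times> int"
(* a configuration X: X i k is the k-th bit X_i^k at site i *)
type_synonym config = "site \<Rightarrow> nat \<Rightarrow> bool"

text \<open>Sigma_K: configurations on Lambda with K bits per site (values outside
  Lambda x {1..K} fixed to False, so that each element of ({0,1}^K)^Lambda
  has exactly one representative).\<close>
definition SigmaK :: "site set \<Rightarrow> nat \<Rightarrow> config set" where
  "SigmaK \<Lambda> K = {X. \<forall>i k. (i \<notin> \<Lambda> \<or> k \<notin> {1..K}) \<longrightarrow> \<not> X i k}"

definition nn_edges :: "site set \<Rightarrow> site set set" where
  "nn_edges \<Lambda> = {{i, j} | i j. i \<in> \<Lambda> \<and> j \<in> \<Lambda> \<and>
      (fst i - fst j)^2 + (snd i - snd j)^2 = 1}"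

definition disagree :: "config \<Rightarrow> nat \<Rightarrow> site set \<Rightarrow> bool" where
  "disagree X k e \<longleftrightarrow> (\<exists>i\<in>e. \<exists>j\<in>e. X i k \<noteq> X j k)"

definition L :: "site set \<Rightarrow> nat \<Rightarrow> real \<Rightarrow> config \<Rightarrow> config \<Rightarrow> real" where
  "L \<Lambda> K \<alpha> X Y =
     \<alpha> * (\<Sum>i\<in>\<Lambda>. \<Sum>k=1..K. (if X i k = Y i k then 1 else 0))
     - (\<Sum>k=1..K. (1/2)^k * (\<Sum>e\<in>nn_edges \<Lambda>. (if disagree X k e then 1 else 0)))"

definition is_MAP :: "site set \<Rightarrow> nat \<Rightarrow> real \<Rightarrow> config \<Rightarrow> config \<Rightarrow> bool" where
  "is_MAP \<Lambda> K \<alpha> Y X \<longleftrightarrow> X \<in> SigmaK \<Lambda> K \<and>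
     (\<forall>Z\<in>SigmaK \<Lambda> K. L \<Lambda> K \<alpha> Z Y \<le> L \<Lambda> K \<alpha> X Y)"

text \<open>F_alpha(Y): the (unique, when it exists) maximizer.\<close>
definition F :: "site set \<Rightarrow> nat \<Rightarrow> real \<Rightarrow> config \<Rightarrow> config" where
  "F \<Lambda> K \<alpha> Y = (THE X. is_MAP \<Lambda> K \<alpha> Y X)"

end

theory Submission
  imports Defs
begin

text \<open>Write \<open>L\<^sub>\<alpha>(X | Y) = \<alpha> A(X, Y) - H(X)\<close> with \<open>A\<close> the number of agreeing bits. Replacing a
  maximizer \<open>X\<close> of \<open>L\<^sub>s(\<cdot> | Y)\<close> by any \<open>Z\<close> changes \<open>A(\<cdot>, Y)\<close> by at most the number \<open>d\<close> of bits
  in which \<open>Z\<close> and \<open>X\<close> differ, so \<open>H(X) - H(Z) \<le> s d \<le> t d = t (A(X, X) - A(Z, X))\<close>,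
  which says \<open>L\<^sub>t(Z | X) \<le> L\<^sub>t(X | X)\<close>.\<close>

definition agreement :: "site set \<Rightarrow> nat \<Rightarrow> config \<Rightarrow> config \<Rightarrow> real" where
  "agreement \<Lambda> K X Y = (\<Sum>i\<in>\<Lambda>. \<Sum>k=1..K. (if X i k = Y i k then 1 else 0))"

definition energy :: "site set \<Rightarrow> nat \<Rightarrow> config \<Rightarrow> real" where
  "energy \<Lambda> K X = (\<Sum>k=1..K. (1/2)^k * (\<Sum>e\<in>nn_edges \<Lambda>. (if disagree X k e then 1 else 0)))"

lemma L_eq_agreement_energy: "L \<Lambda> K \<alpha> X Y = \<alpha> * agreement \<Lambda> K X Y - energy \<Lambda> K X"
  unfolding L_def agreement_def energy_def by simp

lemma agreement_le_self: "agreement \<Lambda> K Z X \<le> agreement \<Lambda> K X X"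
  unfolding agreement_def by (intro sum_mono) auto

lemma agreement_diff_le:
  "agreement \<Lambda> K X Y - agreement \<Lambda> K Z Y \<le> agreement \<Lambda> K X X - agreement \<Lambda> K Z X"
proof -
  have "agreement \<Lambda> K X Y + agreement \<Lambda> K Z X =
      (\<Sum>i\<in>\<Lambda>. \<Sum>k=1..K. (if X i k = Y i k then 1 else 0) + (if Z i k = X i k then 1 else 0))"
    unfolding agreement_def by (simp add: sum.distrib)
  also have "\<dots> \<le> (\<Sum>i\<in>\<Lambda>. \<Sum>k=1..K. 1 + (if Z i k = Y i k then 1 else 0))"
    by (intro sum_mono) auto
  also have "\<dots> = agreement \<Lambda> K X X + agreement \<Lambda> K Z Y"
    unfolding agreement_def by (simp add: sum.distrib)
  finally show ?thesis by simp
qed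

lemma is_MAP_self:
  assumes "0 \<le> s" and "s \<le> t" and MAP: "is_MAP \<Lambda> K s Y X"
  shows "is_MAP \<Lambda> K t X X"
  unfolding is_MAP_def
proof (intro conjI ballI)
  show "X \<in> SigmaK \<Lambda> K"
    using MAP unfolding is_MAP_def by blast
next
  fix Z assume "Z \<in> SigmaK \<Lambda> K"
  then have "energy \<Lambda> K X - energy \<Lambda> K Z \<le> s * (agreement \<Lambda> K X Y - agreement \<Lambda> K Z Y)"
    using MAP unfolding is_MAP_def L_eq_agreement_energy by (auto simp: algebra_simps)
  also have "\<dots> \<le> s * (agreement \<Lambda> K X X - agreement \<Lambda> K Z X)"
    using agreement_diff_le \<open>0 \<le> s\<close> by (rule mult_left_mono)
  also have "\<dots> \<le> t * (agreement \<Lambda> K X X - agreement \<Lambda> K Z X)"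
    using agreement_le_self \<open>s \<le> t\<close> by (simp add: mult_right_mono)
  finally show "L \<Lambda> K t Z X \<le> L \<Lambda> K t X X"
    unfolding L_eq_agreement_energy by (simp add: algebra_simps)
qed

lemma is_MAP_F: "\<exists>!X. is_MAP \<Lambda> K \<alpha> Y X \<Longrightarrow> is_MAP \<Lambda> K \<alpha> Y (F \<Lambda> K \<alpha> Y)"
  by (simp add: F_def theI')

lemma F_eqI: "\<exists>!X. is_MAP \<Lambda> K \<alpha> Y X \<Longrightarrow> is_MAP \<Lambda> K \<alpha> Y X \<Longrightarrow> F \<Lambda> K \<alpha> Y = X"
  by (simp add: F_def the1_equality)

theorem mainTheorem1:
  fixes \<Lambda> :: "site set" and K :: nat and s t :: real and Y :: config
  assumes "finite \<Lambda>" and "K \<ge> 1" and "0 < s" and "s \<le> t" and "Y \<in> SigmaK \<Lambda> K"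
  shows "(\<forall>Xh. is_MAP \<Lambda> K s Y Xh \<longrightarrow> is_MAP \<Lambda> K t Xh Xh)
     \<and> (((\<exists>!X. is_MAP \<Lambda> K s Y X) \<and> (\<exists>!X. is_MAP \<Lambda> K t (F \<Lambda> K s Y) X))
          \<longrightarrow> F \<Lambda> K s Y = F \<Lambda> K t (F \<Lambda> K s Y))"
proof (intro conjI allI impI)
  fix Xh assume "is_MAP \<Lambda> K s Y Xh"
  with \<open>0 < s\<close> \<open>s \<le> t\<close> show "is_MAP \<Lambda> K t Xh Xh"
    by (intro is_MAP_self) auto
next
  assume unique: "(\<exists>!X. is_MAP \<Lambda> K s Y X) \<and> (\<exists>!X. is_MAP \<Lambda> K t (F \<Lambda> K s Y) X)"
  then have "is_MAP \<Lambda> K s Y (F \<Lambda> K s Y)"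
    by (simp add: is_MAP_F)
  with \<open>0 < s\<close> \<open>s \<le> t\<close> have "is_MAP \<Lambda> K t (F \<Lambda> K s Y) (F \<Lambda> K s Y)"
    by (intro is_MAP_self) auto
  with unique show "F \<Lambda> K s Y = F \<Lambda> K t (F \<Lambda> K s Y)"
    by (simp add: F_eqI)
qed

end
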